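(* Let $n\ge r\ge2$ be integers and $H$ a noncomplete graph with $\gamma(H)=1$. Then $\gamma_{(1,0,0)}^s(K_n\circ H)=2$, $\gamma_{(1,0,0)}^s(K_{1,n-1}\circ H)=2$, and $\gamma_{(1,0,0)}^s(K_{n,r}\circ H)=3$ if $r=2$ and $=4$ otherwise.
   Context: All graphs are finite and simple; $\gamma(H)$ is the domination number; $K_n$ is the complete graph and $K_{a,b}$ the complete bipartite graph. For a graph $G$, a function $f:V(G)\to\{0,1,2\}$ is a $(1,0,0)$-dominating function if every vertex $v$ with $f(v)=0$ satisfies $\sum_{u\in N(v)}f(u)\ge1$ ($N(v)$ the open neighbourhood). For adjacent $v,u$ with $f(v)=0$, $f(u)>0$, $f_{u\to v}$ is defined by $f_{u\to v}(v)=1$, $f_{u\to v}(u)=f(u)-1$, $f_{u\to v}(x)=f(x)$ otherwise. $f$ is secure if for every $v$ with $f(v)=0$ there is $u\in N(v)$ with $f(u)>0$ such that $f_{u\to v}$ is $(1,0,0)$-dominating. $\gamma_{(1,0,0)}^s(G)$ is the minimum of $\sum_v f(v)$ over secure $(1,0,0)$-dominating functions. The lexicographic product $G\circ H$ has vertex set $V(G)\times V(H)$, with $(u,v)(x,y)$ an edge iff $ux\in E(G)$, or $u=x$ and $vy\in E(H)$. *)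

theory Defs
  imports Main
begin

definition sgraph :: "'a set \<Rightarrow> ('a \<Rightarrow> 'a \<Rightarrow> bool) \<Rightarrow> bool" where
  "sgraph V E \<longleftrightarrow> finite V \<and> (\<forall>u v. E u v \<longrightarrow> u \<in> V \<and> v \<in> V)
     \<and> (\<forall>u v. E u v \<longrightarrow> E v u) \<and> (\<forall>u. \<not> E u u)"

definition complete_graph :: "'a set \<Rightarrow> ('a \<Rightarrow> 'a \<Rightarrow> bool) \<Rightarrow> bool" where
  "complete_graph V E \<longleftrightarrow> (\<forall>u\<in>V. \<forall>v\<in>V. u \<noteq> v \<longrightarrow> E u v)"

definition dominating_set :: "'a set \<Rightarrow> ('a \<Rightarrow> 'a \<Rightarrow> bool) \<Rightarrow> 'a set \<Rightarrow> bool" where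
  "dominating_set V E D \<longleftrightarrow> D \<subseteq> V \<and> (\<forall>v\<in>V. v \<in> D \<or> (\<exists>u\<in>D. E v u))"

definition domination_number :: "'a set \<Rightarrow> ('a \<Rightarrow> 'a \<Rightarrow> bool) \<Rightarrow> nat" where
  "domination_number V E = (LEAST k. \<exists>D. dominating_set V E D \<and> card D = k)"

text \<open>(1,0,0)-dominating functions f : V -> {0,1,2} (values outside V are irrelevant).\<close>

definition dom100 :: "'a set \<Rightarrow> ('a \<Rightarrow> 'a \<Rightarrow> bool) \<Rightarrow> ('a \<Rightarrow> nat) \<Rightarrow> bool" where
  "dom100 V E f \<longleftrightarrow> (\<forall>v\<in>V. f v \<le> 2)
     \<and> (\<forall>v\<in>V. f v = 0 \<longrightarrow> (\<Sum>u\<in>{u\<in>V. E v u}. f u) \<ge> 1)"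

definition shift :: "('a \<Rightarrow> nat) \<Rightarrow> 'a \<Rightarrow> 'a \<Rightarrow> ('a \<Rightarrow> nat)" where
  "shift f u v = (f(v := 1))(u := f u - 1)"

definition secure_dom100 :: "'a set \<Rightarrow> ('a \<Rightarrow> 'a \<Rightarrow> bool) \<Rightarrow> ('a \<Rightarrow> nat) \<Rightarrow> bool" where
  "secure_dom100 V E f \<longleftrightarrow> dom100 V E f \<and>
     (\<forall>v\<in>V. f v = 0 \<longrightarrow> (\<exists>u\<in>V. E v u \<and> f u > 0 \<and> dom100 V E (shift f u v)))"

definition gamma_s100 :: "'a set \<Rightarrow> ('a \<Rightarrow> 'a \<Rightarrow> bool) \<Rightarrow> nat" where
  "gamma_s100 V E = (LEAST w. \<exists>f. secure_dom100 V E f \<and> (\<Sum>v\<in>V. f v) = w)"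

definition lex_edges :: "'a set \<Rightarrow> ('a \<Rightarrow> 'a \<Rightarrow> bool) \<Rightarrow> 'b set \<Rightarrow> ('b \<Rightarrow> 'b \<Rightarrow> bool)
    \<Rightarrow> ('a \<times> 'b) \<Rightarrow> ('a \<times> 'b) \<Rightarrow> bool" where
  "lex_edges VG EG VH EH p q \<longleftrightarrow> p \<in> VG \<times> VH \<and> q \<in> VG \<times> VH \<and>
     (EG (fst p) (fst q) \<or> (fst p = fst q \<and> EH (snd p) (snd q)))"

definition K_V :: "nat \<Rightarrow> nat set" where "K_V n = {..<n}"
definition K_E :: "nat \<Rightarrow> nat \<Rightarrow> nat \<Rightarrow> bool" where
  "K_E n i j \<longleftrightarrow> i < n \<and> j < n \<and> i \<noteq> j"

text \<open>Complete bipartite K_{a,b}: vertices 0..a+b-1, parts {0..<a} and {a..<a+b}.\<close>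
definition Kab_V :: "nat \<Rightarrow> nat \<Rightarrow> nat set" where "Kab_V a b = {..<a+b}"
definition Kab_E :: "nat \<Rightarrow> nat \<Rightarrow> nat \<Rightarrow> nat \<Rightarrow> bool" where
  "Kab_E a b i j \<longleftrightarrow> i < a + b \<and> j < a + b \<and> ((i < a) \<noteq> (j < a))"

end

(* A secure (1,0,0)-dominating function f on G o H has weight at least 2 on every region
   N[c] x V(H), N[c] the closed neighbourhood of c in G: otherwise one of (c,p), (c,q), for
   non-adjacent p, q in H, has value 0, and after its defender moves in, the region carries
   weight only at that vertex, which leaves the other one undominated.  This gives the lower
   bound 2; for K_{n,r} the bounds for the regions on both sides add up to 3, and to 4 when both
   parts have at least three vertices.  The matching functions put 2 on (g0,h0) for a universal
   vertex g0 of G and a dominating vertex h0 of H, resp. 1 on copies of h0 meeting both parts of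
   K_{n,r} in such a way that every defending move keeps both parts met. *)

theory Submission
  imports Defs
begin

definition closed_nbhd :: "'a set \<Rightarrow> ('a \<Rightarrow> 'a \<Rightarrow> bool) \<Rightarrow> 'a \<Rightarrow> 'a set" where
  "closed_nbhd V E c = {g \<in> V. g = c \<or> E c g}"

lemma gamma_s100_eqI:
  assumes "secure_dom100 V E f" "(\<Sum>v\<in>V. f v) = w"
    and "\<And>f. secure_dom100 V E f \<Longrightarrow> w \<le> (\<Sum>v\<in>V. f v)"
  shows "gamma_s100 V E = w"
  unfolding gamma_s100_def by (rule Least_equality) (use assms in auto)

lemma sgraph_dominating_vertex:
  assumes "sgraph V E" "domination_number V E = 1"
  obtains v where "v \<in> V" "\<And>u. u \<in> V \<Longrightarrow> u \<noteq> v \<Longrightarrow> E u v"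
proof -
  have "\<exists>D. dominating_set V E D \<and> card D = domination_number V E"
    unfolding domination_number_def
    by (rule LeastI_ex) (use assms(1) in \<open>auto simp: dominating_set_def\<close>)
  then obtain D where "dominating_set V E D" "card D = 1" using assms(2) by auto
  then obtain v where "D = {v}" "dominating_set V E {v}" by (metis card_1_singletonE)
  then show thesis by (intro that) (auto simp: dominating_set_def)
qed

lemma sgraph_noncomplete_nonadjacent_pair:
  assumes "sgraph V E" "\<not> complete_graph V E"
  obtains p q where "p \<in> V" "q \<in> V" "p \<noteq> q" "\<not> E p q" "\<not> E q p"
  using assms unfolding sgraph_def complete_graph_def by blast

lemma lex_layer_zero_forces_weight_ge_2:
  fixes f :: "'a \<times> 'b \<Rightarrow> nat"
  assumes fin: "finite VG" "finite VH" and c: "c \<in> VG" "\<not> EG c c"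
    and ab: "a \<in> VH" "b \<in> VH" "a \<noteq> b" "\<not> EH b a"
    and sec: "secure_dom100 (VG \<times> VH) (lex_edges VG EG VH EH) f"
    and fca: "f (c,a) = 0"
  shows "2 \<le> sum f (closed_nbhd VG EG c \<times> VH)"
proof (rule ccontr)
  define V E T where "V = VG \<times> VH" and "E = lex_edges VG EG VH EH"
    and "T = closed_nbhd VG EG c \<times> VH"
  assume "\<not> ?thesis"
  then have T_le_1: "sum f T \<le> 1" by (simp add: T_def)
  have finT: "finite T" using fin by (simp add: T_def closed_nbhd_def)
  from sec fca c ab obtain u where "u \<in> V" "E (c,a) u" "0 < f u"
    and dom: "dom100 V E (shift f u (c,a))"
    unfolding secure_dom100_def V_def E_def by fastforce
  then have uT: "u \<in> T"
    by (auto simp: T_def V_def E_def lex_edges_def closed_nbhd_def)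
  have fu: "f u = 1"
    using member_le_sum[OF uT, of f] finT T_le_1 \<open>0 < f u\<close> by linarith
  have f_T_other: "f x = 0" if "x \<in> T" "x \<noteq> u" for x
    using sum_mono2[OF finT, of "{x,u}" f] that uT fu T_le_1 by auto
  define g where "g = shift f u (c,a)"
  have g_T: "g y = 0" if "y \<in> T" "y \<noteq> (c,a)" for y
    using that f_T_other fu by (auto simp: g_def shift_def)
  \<comment> \<open>After the move only (c,a) carries weight near c, and it cannot defend its non-neighbour (c,b).\<close>
  have "(c,b) \<in> V" "g (c,b) = 0"
    using c ab g_T by (auto simp: V_def T_def closed_nbhd_def)
  with dom have "1 \<le> sum g {y \<in> V. E (c,b) y}" by (auto simp: dom100_def g_def)
  moreover have "sum g {y \<in> V. E (c,b) y} = 0"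
    using c ab by (intro sum.neutral ballI g_T)
      (auto simp: T_def V_def E_def lex_edges_def closed_nbhd_def)
  ultimately show False by simp
qed

lemma lex_closed_nbhd_weight_ge_2:
  fixes f :: "'a \<times> 'b \<Rightarrow> nat"
  assumes fin: "finite VG" "finite VH" and c: "c \<in> VG" "\<not> EG c c"
    and pq: "p \<in> VH" "q \<in> VH" "p \<noteq> q" "\<not> EH p q" "\<not> EH q p"
    and sec: "secure_dom100 (VG \<times> VH) (lex_edges VG EG VH EH) f"
  shows "2 \<le> sum f (closed_nbhd VG EG c \<times> VH)"
proof (rule ccontr)
  assume light: "\<not> ?thesis"
  moreover have "sum f {(c,p),(c,q)} \<le> sum f (closed_nbhd VG EG c \<times> VH)"
    using fin c pq by (intro sum_mono2) (auto simp: closed_nbhd_def)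
  ultimately have "f (c,p) = 0 \<or> f (c,q) = 0" using pq by auto
  then show False
    using lex_layer_zero_forces_weight_ge_2[OF fin c _ _ _ _ sec] pq light by metis
qed

lemma lex_layered_closed_nbhd_weight_ge_2:
  fixes f :: "'a \<times> 'b \<Rightarrow> nat"
  assumes fin: "finite VG" "finite VH" and c: "c \<in> VG" "\<not> EG c c"
    and pq: "p \<in> VH" "q \<in> VH" "p \<noteq> q" "\<not> EH p q" "\<not> EH q p"
    and sec: "secure_dom100 (VG \<times> VH) (lex_edges VG EG VH EH) f"
  shows "2 \<le> (\<Sum>g\<in>closed_nbhd VG EG c. \<Sum>h\<in>VH. f (g,h))"
  using lex_closed_nbhd_weight_ge_2[OF assms] fin
  by (simp add: sum.cartesian_product closed_nbhd_def)

lemma lex_weight_ge_2: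
  fixes f :: "'a \<times> 'b \<Rightarrow> nat"
  assumes fin: "finite VG" "finite VH" and c: "c \<in> VG" "\<not> EG c c"
    and pq: "p \<in> VH" "q \<in> VH" "p \<noteq> q" "\<not> EH p q" "\<not> EH q p"
    and sec: "secure_dom100 (VG \<times> VH) (lex_edges VG EG VH EH) f"
  shows "2 \<le> sum f (VG \<times> VH)"
proof -
  have "2 \<le> sum f (closed_nbhd VG EG c \<times> VH)"
    by (rule lex_closed_nbhd_weight_ge_2[OF assms])
  also have "\<dots> \<le> sum f (VG \<times> VH)"
    using fin by (intro sum_mono2) (auto simp: closed_nbhd_def)
  finally show ?thesis .
qed

lemma two_sided_weight_bound:
  fixes a b k m :: nat
  assumes "m * (2 - b) \<le> a" "k * (2 - a) \<le> b" "2 \<le> k" "k \<le> m"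
  shows "min k 3 + 1 \<le> a + b"
proof -
  consider "a = 0" | "a = 1" | "b = 0" | "b = 1" | "2 \<le> a" "2 \<le> b" by linarith
  then show ?thesis
  proof cases
    case 1
    then show ?thesis using assms(2,3) by simp
  next
    case 2
    then show ?thesis using assms(2) by simp
  next
    case 3
    then show ?thesis using assms(1,3,4) by simp
  next
    case 4
    then show ?thesis using assms(1,4) by simp
  qed simp
qed

lemma secure_dom100_universal_vertex:
  assumes "finite V" "x0 \<in> V" "\<And>v. v \<in> V \<Longrightarrow> v \<noteq> x0 \<Longrightarrow> E v x0"
  shows "secure_dom100 V E (\<lambda>x. if x = x0 then 2 else 0)"
proof -
  have dom: "dom100 V E h" if "\<forall>v\<in>V. h v \<le> 2" "1 \<le> h x0" for h
    unfolding dom100_def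
  proof (intro conjI ballI impI)
    fix v assume v: "v \<in> V" "h v = 0"
    with that(2) have "v \<noteq> x0" by auto
    then have "h x0 \<le> (\<Sum>u\<in>{u\<in>V. E v u}. h u)"
      using assms v by (intro member_le_sum) auto
    then show "1 \<le> (\<Sum>u\<in>{u\<in>V. E v u}. h u)" using that(2) by simp
  qed (use that in auto)
  show ?thesis
    unfolding secure_dom100_def
  proof (intro conjI ballI impI)
    show "dom100 V E (\<lambda>x. if x = x0 then 2 else 0)" by (rule dom) auto
    fix v assume "v \<in> V" "(if v = x0 then 2 else 0::nat) = 0"
    moreover have "dom100 V E (shift (\<lambda>x. if x = x0 then 2 else 0) x0 v)"
      by (rule dom) (auto simp: shift_def)
    ultimately show "\<exists>u\<in>V. E v u \<and> 0 < (if u = x0 then 2 else 0::nat)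
        \<and> dom100 V E (shift (\<lambda>x. if x = x0 then 2 else 0) u v)"
      using assms by (auto split: if_splits)
  qed
qed

lemma gamma_s100_lex_universal_vertex:
  assumes fin: "finite VG" "finite VH"
    and g0: "g0 \<in> VG" "\<not> EG g0 g0" "\<And>g. g \<in> VG \<Longrightarrow> g \<noteq> g0 \<Longrightarrow> EG g g0"
    and h0: "h0 \<in> VH" "\<And>h. h \<in> VH \<Longrightarrow> h \<noteq> h0 \<Longrightarrow> EH h h0"
    and pq: "p \<in> VH" "q \<in> VH" "p \<noteq> q" "\<not> EH p q" "\<not> EH q p"
  shows "gamma_s100 (VG \<times> VH) (lex_edges VG EG VH EH) = 2"
proof (rule gamma_s100_eqI)
  show "secure_dom100 (VG \<times> VH) (lex_edges VG EG VH EH) (\<lambda>x. if x = (g0,h0) then 2 else 0)"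
    using fin g0 h0 by (intro secure_dom100_universal_vertex) (auto simp: lex_edges_def, metis)
  show "(\<Sum>x\<in>VG \<times> VH. if x = (g0,h0) then 2 else 0) = 2"
    using fin g0 h0 by simp
qed (rule lex_weight_ge_2[where EG = EG and EH = EH, OF fin g0(1,2) pq])

lemma dom100_of_bool:
  assumes "finite V" "dominating_set V E S"
  shows "dom100 V E (\<lambda>x. of_bool (x \<in> S))"
  unfolding dom100_def
proof (intro conjI ballI impI)
  fix v assume "v \<in> V" "of_bool (v \<in> S) = (0::nat)"
  then obtain x where x: "x \<in> S" "E v x" using assms(2) by (auto simp: dominating_set_def)
  then have "of_bool (x \<in> S) \<le> (\<Sum>u\<in>{u\<in>V. E v u}. of_bool (u \<in> S) :: nat)"
    using assms by (intro member_le_sum) (auto simp: dominating_set_def)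
  then show "1 \<le> (\<Sum>u\<in>{u\<in>V. E v u}. of_bool (u \<in> S) :: nat)" using x by simp
qed auto

lemma secure_dom100_of_bool:
  assumes fin: "finite V" and dom: "dominating_set V E S"
    and move: "\<And>v. v \<in> V \<Longrightarrow> v \<notin> S \<Longrightarrow>
      \<exists>u\<in>S. E v u \<and> dominating_set V E (insert v (S - {u}))"
  shows "secure_dom100 V E (\<lambda>x. of_bool (x \<in> S))"
  unfolding secure_dom100_def
proof (intro conjI ballI impI)
  show "dom100 V E (\<lambda>x. of_bool (x \<in> S))" by (rule dom100_of_bool[OF fin dom])
  fix v assume v: "v \<in> V" "of_bool (v \<in> S) = (0::nat)"
  then obtain u where u: "u \<in> S" "E v u" "dominating_set V E (insert v (S - {u}))"
    using move by auto
  have "shift (\<lambda>x. of_bool (x \<in> S)) u v = (\<lambda>x. of_bool (x \<in> insert v (S - {u})))"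
    using u v by (auto simp: shift_def)
  then have "dom100 V E (shift (\<lambda>x. of_bool (x \<in> S)) u v)"
    using dom100_of_bool[OF fin u(3)] by simp
  then show "\<exists>u\<in>V. E v u \<and> 0 < (of_bool (u \<in> S) :: nat)
      \<and> dom100 V E (shift (\<lambda>x. of_bool (x \<in> S)) u v)"
    using u dom by (auto simp: dominating_set_def)
qed

lemma sum_of_bool_subset:
  assumes "finite V" "S \<subseteq> V"
  shows "(\<Sum>x\<in>V. of_bool (x \<in> S) :: nat) = card S"
  using assms by (simp add: Int_absorb1 Collect_mem_eq)

lemma Kab_lex_edge:
  assumes "g < n + r" "g' < n + r" "(g < n) \<noteq> (g' < n)" "h \<in> VH" "h' \<in> VH"
  shows "lex_edges (Kab_V n r) (Kab_E n r) VH EH (g,h) (g',h')"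
  using assms by (simp add: lex_edges_def Kab_V_def Kab_E_def)

lemma Kab_lex_dominating_set:
  assumes S: "S \<subseteq> Kab_V n r \<times> VH" and x: "x \<in> S" "fst x < n" and y: "y \<in> S" "n \<le> fst y"
  shows "dominating_set (Kab_V n r \<times> VH) (lex_edges (Kab_V n r) (Kab_E n r) VH EH) S"
  unfolding dominating_set_def
proof (intro conjI ballI S)
  fix w assume w: "w \<in> Kab_V n r \<times> VH"
  have "lex_edges (Kab_V n r) (Kab_E n r) VH EH w (if fst w < n then y else x)"
    using w x y S by (cases w, cases x, cases y) (auto simp: lex_edges_def Kab_V_def Kab_E_def)
  then show "w \<in> S \<or> (\<exists>u\<in>S. lex_edges (Kab_V n r) (Kab_E n r) VH EH w u)"
    using x y by (metis (full_types))
qed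

lemma Kab_lex_secure_weight_3:
  assumes fin: "finite VH" and n: "0 < n"
    and h0: "h0 \<in> VH" "\<And>h. h \<in> VH \<Longrightarrow> h \<noteq> h0 \<Longrightarrow> EH h h0"
  shows "secure_dom100 (Kab_V n 2 \<times> VH) (lex_edges (Kab_V n 2) (Kab_E n 2) VH EH)
    (\<lambda>x. of_bool (x \<in> {(0,h0), (n,h0), (n+1,h0)}))"
proof (rule secure_dom100_of_bool)
  define V E S where "V = Kab_V n 2 \<times> VH" and "E = lex_edges (Kab_V n 2) (Kab_E n 2) VH EH"
    and "S = {(0::nat,h0), (n,h0), (n+1,h0)}"
  have dom: "dominating_set V E S'" if "S' \<subseteq> V" "x \<in> S'" "fst x < n" "y \<in> S'" "n \<le> fst y" for S' x y
    using Kab_lex_dominating_set that unfolding V_def E_def by blast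
  show "finite V" using fin by (simp add: V_def Kab_V_def)
  show "dominating_set V E S"
    using n h0 by (intro dom[of _ "(0,h0)" "(n,h0)"]) (auto simp: S_def V_def Kab_V_def)
  fix v assume v: "v \<in> V" "v \<notin> S"
  then obtain g h where gh: "v = (g,h)" "g < n + 2" "h \<in> VH" by (auto simp: V_def Kab_V_def)
  show "\<exists>u\<in>S. E v u \<and> dominating_set V E (insert v (S - {u}))"
  proof (cases "g < n")
    case True
    then have "E v (n,h0)" using gh h0 by (auto simp: E_def intro: Kab_lex_edge)
    moreover have "dominating_set V E (insert v (S - {(n,h0)}))"
      using True v n h0 by (intro dom[of _ v "(n+1,h0)"]) (auto simp: gh S_def V_def Kab_V_def)
    ultimately show ?thesis by (auto simp: S_def)
  next
    case False
    \<comment> \<open>Here v lies in the part of size two, so it shares its G-layer with (g,h0) and h is dominated by h0.\<close>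
    then have "(g,h0) \<in> S" "h \<noteq> h0" using gh v by (auto simp: S_def)
    moreover have "E v (g,h0)"
      using gh h0 \<open>h \<noteq> h0\<close> by (auto simp: E_def lex_edges_def Kab_V_def)
    moreover have "dominating_set V E (insert v (S - {(g,h0)}))"
      using False v n h0 by (intro dom[of _ "(0,h0)" v]) (auto simp: gh S_def V_def Kab_V_def)
    ultimately show ?thesis by blast
  qed
qed

lemma Kab_lex_secure_weight_4:
  assumes fin: "finite VH" and nr: "2 \<le> n" "2 \<le> r" and h0: "h0 \<in> VH"
  shows "secure_dom100 (Kab_V n r \<times> VH) (lex_edges (Kab_V n r) (Kab_E n r) VH EH)
    (\<lambda>x. of_bool (x \<in> {(0,h0), (1,h0), (n,h0), (n+1,h0)}))"
proof (rule secure_dom100_of_bool)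
  define V E S where "V = Kab_V n r \<times> VH" and "E = lex_edges (Kab_V n r) (Kab_E n r) VH EH"
    and "S = {(0::nat,h0), (1,h0), (n,h0), (n+1,h0)}"
  have dom: "dominating_set V E S'" if "S' \<subseteq> V" "x \<in> S'" "fst x < n" "y \<in> S'" "n \<le> fst y" for S' x y
    using Kab_lex_dominating_set that unfolding V_def E_def by blast
  show "finite V" using fin by (simp add: V_def Kab_V_def)
  show "dominating_set V E S"
    using nr h0 by (intro dom[of _ "(0,h0)" "(n,h0)"]) (auto simp: S_def V_def Kab_V_def)
  fix v assume v: "v \<in> V" "v \<notin> S"
  then obtain g h where gh: "v = (g,h)" "g < n + r" "h \<in> VH" by (auto simp: V_def Kab_V_def)
  show "\<exists>u\<in>S. E v u \<and> dominating_set V E (insert v (S - {u}))"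
  proof (cases "g < n")
    case True
    then have "E v (n,h0)" using gh h0 nr by (auto simp: E_def intro: Kab_lex_edge)
    moreover have "dominating_set V E (insert v (S - {(n,h0)}))"
      using True v nr h0 by (intro dom[of _ v "(n+1,h0)"]) (auto simp: gh S_def V_def Kab_V_def)
    ultimately show ?thesis by (auto simp: S_def)
  next
    case False
    then have "E v (0,h0)" using gh h0 nr by (auto simp: E_def intro: Kab_lex_edge)
    moreover have "dominating_set V E (insert v (S - {(0,h0)}))"
      using False v nr h0 by (intro dom[of _ "(1,h0)" v]) (auto simp: gh S_def V_def Kab_V_def)
    ultimately show ?thesis by (auto simp: S_def)
  qed
qed

lemma Kab_closed_nbhd:
  assumes "c < n + r"
  shows "closed_nbhd (Kab_V n r) (Kab_E n r) c = insert c (if c < n then {n..<n+r} else {..<n})"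
  using assms by (auto simp: closed_nbhd_def Kab_V_def Kab_E_def)

lemma Kab_lex_weight_lower_bound:
  fixes f :: "nat \<times> 'b \<Rightarrow> nat"
  assumes fin: "finite VH" and r: "2 \<le> r" "r \<le> n"
    and pq: "p \<in> VH" "q \<in> VH" "p \<noteq> q" "\<not> EH p q" "\<not> EH q p"
    and sec: "secure_dom100 (Kab_V n r \<times> VH) (lex_edges (Kab_V n r) (Kab_E n r) VH EH) f"
  shows "min r 3 + 1 \<le> sum f (Kab_V n r \<times> VH)"
proof -
  define L where "L g = (\<Sum>h\<in>VH. f (g,h))" for g
  define WA WB where "WA = sum L {..<n}" and "WB = sum L {n..<n+r}"
  have total: "sum f (Kab_V n r \<times> VH) = WA + WB"
    using fin sum.atLeastLessThan_concat[of 0 n "n+r" L]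
    by (simp add: Kab_V_def L_def WA_def WB_def sum.cartesian_product atLeast0LessThan)
  have nbhd: "2 \<le> L c + (if c < n then WB else WA)" if "c < n + r" for c
  proof -
    have "2 \<le> sum L (closed_nbhd (Kab_V n r) (Kab_E n r) c)"
      unfolding L_def using that
      by (intro lex_layered_closed_nbhd_weight_ge_2[OF _ fin _ _ pq sec])
        (auto simp: Kab_V_def Kab_E_def)
    then show ?thesis using that by (simp add: Kab_closed_nbhd WA_def WB_def split: if_splits)
  qed
  have "2 - WB \<le> L c" if "c < n" for c
    using nbhd[of c] that by simp
  then have A: "n * (2 - WB) \<le> WA"
    using sum_bounded_below[of "{..<n}" "2 - WB" L] by (simp add: WA_def)
  have "2 - WA \<le> L c" if "c \<in> {n..<n+r}" for c
    using nbhd[of c] that by simp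
  then have B: "r * (2 - WA) \<le> WB"
    using sum_bounded_below[of "{n..<n+r}" "2 - WA" L] by (simp add: WB_def)
  show ?thesis using two_sided_weight_bound[OF A B r] total by simp
qed

lemma gamma_s100_Kab_lex:
  assumes fin: "finite VH" and r: "2 \<le> r" "r \<le> n"
    and h0: "h0 \<in> VH" "\<And>h. h \<in> VH \<Longrightarrow> h \<noteq> h0 \<Longrightarrow> EH h h0"
    and pq: "p \<in> VH" "q \<in> VH" "p \<noteq> q" "\<not> EH p q" "\<not> EH q p"
  shows "gamma_s100 (Kab_V n r \<times> VH) (lex_edges (Kab_V n r) (Kab_E n r) VH EH) = min r 3 + 1"
proof (cases "r = 2")
  case True
  show ?thesis
  proof (rule gamma_s100_eqI)
    show "secure_dom100 (Kab_V n r \<times> VH) (lex_edges (Kab_V n r) (Kab_E n r) VH EH)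
        (\<lambda>x. of_bool (x \<in> {(0,h0), (n,h0), (n+1,h0)}))"
      unfolding True using fin r h0 by (intro Kab_lex_secure_weight_3) auto
    show "(\<Sum>x\<in>Kab_V n r \<times> VH. of_bool (x \<in> {(0,h0), (n,h0), (n+1,h0)})) = min r 3 + 1"
      using fin r h0 True by (subst sum_of_bool_subset) (auto simp: Kab_V_def)
  qed (rule Kab_lex_weight_lower_bound[OF fin r pq])
next
  case False
  show ?thesis
  proof (rule gamma_s100_eqI)
    show "secure_dom100 (Kab_V n r \<times> VH) (lex_edges (Kab_V n r) (Kab_E n r) VH EH)
        (\<lambda>x. of_bool (x \<in> {(0,h0), (1,h0), (n,h0), (n+1,h0)}))"
      using fin r h0 by (intro Kab_lex_secure_weight_4) auto
    show "(\<Sum>x\<in>Kab_V n r \<times> VH. of_bool (x \<in> {(0,h0), (1,h0), (n,h0), (n+1,h0)})) = min r 3 + 1"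
      using fin r h0 False by (subst sum_of_bool_subset) (auto simp: Kab_V_def)
  qed (rule Kab_lex_weight_lower_bound[OF fin r pq])
qed

theorem corollary16:
  fixes VH :: "'b set" and EH :: "'b \<Rightarrow> 'b \<Rightarrow> bool" and n r :: nat
  assumes "sgraph VH EH" and "\<not> complete_graph VH EH"
    and "domination_number VH EH = 1"
    and "n \<ge> r" and "r \<ge> 2"
  shows "gamma_s100 (K_V n \<times> VH) (lex_edges (K_V n) (K_E n) VH EH) = 2
    \<and> gamma_s100 (Kab_V 1 (n - 1) \<times> VH) (lex_edges (Kab_V 1 (n - 1)) (Kab_E 1 (n - 1)) VH EH) = 2
    \<and> gamma_s100 (Kab_V n r \<times> VH) (lex_edges (Kab_V n r) (Kab_E n r) VH EH)
        = (if r = 2 then 3 else 4)"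
proof -
  have fin: "finite VH" using assms(1) by (simp add: sgraph_def)
  obtain h0 where h0: "h0 \<in> VH" "\<And>h. h \<in> VH \<Longrightarrow> h \<noteq> h0 \<Longrightarrow> EH h h0"
    using sgraph_dominating_vertex[OF assms(1,3)] by blast
  obtain p q where pq: "p \<in> VH" "q \<in> VH" "p \<noteq> q" "\<not> EH p q" "\<not> EH q p"
    using sgraph_noncomplete_nonadjacent_pair[OF assms(1,2)] by blast
  have "gamma_s100 (K_V n \<times> VH) (lex_edges (K_V n) (K_E n) VH EH) = 2"
    using assms(4,5) by (intro gamma_s100_lex_universal_vertex[OF _ fin _ _ _ h0 pq, of _ 0])
      (auto simp: K_V_def K_E_def)
  moreover have "gamma_s100 (Kab_V 1 (n - 1) \<times> VH)
      (lex_edges (Kab_V 1 (n - 1)) (Kab_E 1 (n - 1)) VH EH) = 2"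
    using assms(4,5) by (intro gamma_s100_lex_universal_vertex[OF _ fin _ _ _ h0 pq, of _ 0])
      (auto simp: Kab_V_def Kab_E_def)
  moreover have "gamma_s100 (Kab_V n r \<times> VH) (lex_edges (Kab_V n r) (Kab_E n r) VH EH)
      = min r 3 + 1"
    using assms(4,5) by (intro gamma_s100_Kab_lex[OF fin _ _ h0 pq])
  ultimately show ?thesis using assms(5) by (simp add: min_def)
qed

end
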